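(* For all complex $q$ with $|q|<1$, $$\sum_{n\ge0}\sum_{m\ge0}(-1)^m q^{\frac{n(n+3)}{2}+2nm+2m(m+1)}-\sum_{n<0}\sum_{m<0}(-1)^m q^{\frac{n(n+3)}{2}+2nm+2m(m+1)}=\frac{2(q^2;q^2)_\infty}{(1+q)(q;q^2)_\infty}-\frac{(q^2;q^2)_\infty}{(1+q)(-q^2;q^2)_\infty},$$ where the second double sum runs over all pairs of negative integers $n,m$.
   Context: For $n\in\mathbb N_0\cup\{\infty\}$, $(a;q)_n:=\prod_{j=0}^{n-1}(1-aq^j)$. *)

theory Defs
  imports "HOL-Analysis.Analysis"
begin

definition qpoch_inf :: "complex \<Rightarrow> complex \<Rightarrow> complex" where
  "qpoch_inf a q = (\<Prod>j. (1 - a * q ^ j))"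

text \<open>The exponent n(n+3)/2 + 2nm + 2m(m+1) (always an integer).\<close>
definition expo :: "int \<Rightarrow> int \<Rightarrow> int" where
  "expo n m = n * (n + 3) div 2 + 2 * n * m + 2 * m * (m + 1)"

end

(*
  Reindexing by k = n + 2m on the first quadrant (and by the analogous affine map on the
  negative one) turns each double series into a series of finite alternating geometric sums,
  which telescope after multiplication by 1 + q.  Splitting the telescoped series by the parity
  of k leaves 2 * sum_{j>=0} q^(j(j+1)/2) - sum_{n in Z} (-1)^n q^(2n^2), and Gauss's product
  formulas for these two theta series are the specialisations w = q and (q, w) -> (q^4, -q^2)
  of the Jacobi triple product.  The triple product is obtained from its finite form, a
  consequence of the q-binomial theorem, by Tannery's theorem.
*)

theory Submission
  imports Defs
begin

lemma choose_two_Suc: "Suc n choose 2 = (n choose 2) + n"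
  by (simp add: numeral_2_eq_2 choose_one)

lemma double_choose_two: "2 * (n choose 2) + n = n * n"
  by (induction n) (simp_all add: choose_two_Suc algebra_simps)

lemma choose_two_add: "(a + b) choose 2 = (a choose 2) + (b choose 2) + a * b"
  by (induction b) (simp_all add: choose_two_Suc algebra_simps)

definition qpoch :: "'a::comm_ring_1 \<Rightarrow> 'a \<Rightarrow> nat \<Rightarrow> 'a" where
  "qpoch a q n = (\<Prod>j<n. 1 - a * q ^ j)"

fun qbinomial :: "'a::comm_ring_1 \<Rightarrow> nat \<Rightarrow> nat \<Rightarrow> 'a" where
  "qbinomial q 0 k = (if k = 0 then 1 else 0)"
| "qbinomial q (Suc n) 0 = 1"
| "qbinomial q (Suc n) (Suc k) = qbinomial q n (Suc k) + q ^ (n - k) * qbinomial q n k"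

lemma qpoch_Suc: "qpoch a q (Suc n) = qpoch a q n * (1 - a * q ^ n)"
  by (simp add: qpoch_def)

lemma qbinomial_eq_0: "n < k \<Longrightarrow> qbinomial q n k = 0"
  by (induction q n k rule: qbinomial.induct) auto

lemma qbinomial_n_0 [simp]: "qbinomial q n 0 = 1"
  by (cases n) auto

lemma qbinomial_n_n [simp]: "qbinomial q n n = 1"
  by (induction n) (auto simp: qbinomial_eq_0)

lemma qbinomial_mult_qpoch:
  "k \<le> n \<Longrightarrow> qbinomial q n k * qpoch q q k * qpoch q q (n - k) = qpoch q q n"
proof (induction n arbitrary: k)
  case 0
  then show ?case by (simp add: qpoch_def)
next
  case (Suc n)
  show ?case
  proof (cases k)
    case 0
    then show ?thesis by (simp add: qpoch_def)
  next
    case (Suc l)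
    show ?thesis
    proof (cases "l = n")
      case True
      then show ?thesis using Suc by (simp add: qbinomial_eq_0 qpoch_def)
    next
      case False
      with Suc \<open>k \<le> Suc n\<close> have "l < n" by simp
      then have nl: "n - l = Suc (n - Suc l)" by simp
      have IH1: "qbinomial q n (Suc l) * qpoch q q (Suc l) * qpoch q q (n - Suc l) = qpoch q q n"
        and IH2: "qbinomial q n l * qpoch q q l * qpoch q q (n - l) = qpoch q q n"
        using Suc.IH \<open>l < n\<close> by simp_all
      have "qbinomial q (Suc n) k * qpoch q q k * qpoch q q (Suc n - k)
          = (qbinomial q n (Suc l) * qpoch q q (Suc l) * qpoch q q (n - Suc l)) * (1 - q * q ^ (n - Suc l))
            + q ^ (n - l) * (qbinomial q n l * qpoch q q l * qpoch q q (n - l)) * (1 - q * q ^ l)"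
        using Suc by (simp add: nl qpoch_Suc algebra_simps)
      also have "\<dots> = qpoch q q n * (1 - q * q ^ n)"
      proof -
        have "q * q ^ (n - Suc l) = q ^ (n - l)" by (simp add: nl)
        moreover have "q ^ (n - l) * (q * q ^ l) = q * q ^ n"
          using \<open>l < n\<close> by (simp flip: power_add power_Suc)
        ultimately show ?thesis unfolding IH1 IH2 by (simp add: algebra_simps)
      qed
      finally show ?thesis by (simp add: qpoch_Suc)
    qed
  qed
qed

theorem qbinomial_theorem:
  fixes q z :: "'a::comm_ring_1"
  shows "(\<Prod>i<n. 1 + z * q ^ i) = (\<Sum>k\<le>n. qbinomial q n k * q ^ (k choose 2) * z ^ k)"
proof (induction n)
  case 0
  then show ?case by (simp add: choose_two)
next
  case (Suc n)
  let ?t = "\<lambda>n k. qbinomial q n k * q ^ (k choose 2) * z ^ k"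
  have shift: "?t n k * (z * q ^ n) = q ^ (n - k) * qbinomial q n k * q ^ (Suc k choose 2) * z ^ Suc k"
    if "k \<le> n" for k
  proof -
    have "q ^ n = q ^ (n - k) * q ^ k" using that by (simp flip: power_add)
    then show ?thesis by (simp add: choose_two_Suc power_add algebra_simps)
  qed
  have drop_top: "(\<Sum>k\<le>n. ?t n k) = 1 + (\<Sum>k\<le>n. ?t n (Suc k))"
  proof -
    have "(\<Sum>k\<le>n. ?t n k) = (\<Sum>k\<le>Suc n. ?t n k)"
      by (simp add: qbinomial_eq_0)
    also have "\<dots> = 1 + (\<Sum>k\<le>n. ?t n (Suc k))"
      by (subst sum.atMost_Suc_shift) (simp add: choose_two)
    finally show ?thesis .
  qed
  have "(\<Prod>i<Suc n. 1 + z * q ^ i) = (\<Sum>k\<le>n. ?t n k) + (\<Sum>k\<le>n. ?t n k * (z * q ^ n))"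
    using Suc by (simp add: distrib_left sum_distrib_right)
  also have "\<dots> = 1 + (\<Sum>k\<le>n. ?t n (Suc k)
      + q ^ (n - k) * qbinomial q n k * q ^ (Suc k choose 2) * z ^ Suc k)"
    by (simp add: drop_top shift sum.distrib)
  also have "\<dots> = (\<Sum>k\<le>Suc n. ?t (Suc n) k)"
    by (subst sum.atMost_Suc_shift) (simp add: choose_two algebra_simps)
  finally show ?case .
qed

lemma sum_atMost_double_split:
  "(\<Sum>k\<le>2 * N. g k) = (\<Sum>j\<le>N. g (N + j)) + (\<Sum>j<N. g (N - Suc j))"
proof -
  have "{..2 * N} = {..<N} \<union> {N..N + N}" by auto
  then have "(\<Sum>k\<le>2 * N. g k) = (\<Sum>k<N. g k) + (\<Sum>k=N..N + N. g k)"
    by (simp only:) (rule sum.union_disjoint, auto)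
  also have "(\<Sum>k=N..N + N. g k) = (\<Sum>j\<le>N. g (N + j))"
    using sum.atLeastAtMost_shift_bounds[of "\<lambda>k. g k" 0 N N]
    by (simp add: atMost_atLeast0 add.commute)
  also have "(\<Sum>k<N. g k) = (\<Sum>j<N. g (N - Suc j))"
    by (rule sum.nat_diff_reindex[symmetric])
  finally show ?thesis by (simp add: add.commute)
qed

lemma prod_lessThan_add: "(\<Prod>i<N + (M::nat). f i) = (\<Prod>i<N. f i) * (\<Prod>i<M. f (N + i))"
  by (induction M) (simp_all add: ac_simps)

lemma sum_Suc_eq_choose_two: "(\<Sum>i<N. Suc i) = Suc N choose 2"
  by (induction N) (simp_all add: choose_two choose_two_Suc)

lemma finite_jacobi_product_rescale:
  fixes q w :: "'a::field"
  assumes q: "q \<noteq> 0" and w: "w \<noteq> 0"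
  shows "(\<Prod>i<N. 1 + w * q ^ i) * (\<Prod>i<N. 1 + q ^ Suc i / w)
       = q ^ (Suc N choose 2) / w ^ N * (\<Prod>i<2 * N. 1 + w / q ^ N * q ^ i)"
proof -
  let ?z = "w / q ^ N"
  have "(\<Prod>i<2 * N. 1 + ?z * q ^ i) = (\<Prod>i<N. 1 + ?z * q ^ i) * (\<Prod>i<N. 1 + ?z * q ^ (N + i))"
    by (simp add: mult_2 prod_lessThan_add)
  also have "(\<Prod>i<N. 1 + ?z * q ^ (N + i)) = (\<Prod>i<N. 1 + w * q ^ i)"
    using q by (simp add: power_add)
  also have "(\<Prod>i<N. 1 + ?z * q ^ i) = (\<Prod>i<N. 1 + ?z * q ^ (N - Suc i))"
    by (rule prod.nat_diff_reindex[symmetric])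
  also have "\<dots> = (\<Prod>i<N. w / q ^ Suc i * (1 + q ^ Suc i / w))"
  proof (rule prod.cong[OF refl])
    fix i assume "i \<in> {..<N}"
    then have "N = (N - Suc i) + Suc i" by simp
    then have "q ^ N = q ^ (N - Suc i) * q ^ Suc i" by (metis power_add)
    then show "1 + ?z * q ^ (N - Suc i) = w / q ^ Suc i * (1 + q ^ Suc i / w)"
      using q w by (simp add: field_simps)
  qed
  also have "\<dots> = w ^ N / q ^ (Suc N choose 2) * (\<Prod>i<N. 1 + q ^ Suc i / w)"
    by (simp add: prod.distrib prod_dividef power_sum flip: sum_Suc_eq_choose_two)
  finally show ?thesis
    using q w by (simp add: field_simps)
qed

lemma finite_jacobi_term_upper:
  fixes q w :: "'a::field"
  assumes "q \<noteq> 0" "w \<noteq> 0"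
  shows "q ^ (Suc N choose 2) / w ^ N * (c * q ^ ((N + j) choose 2) * (w / q ^ N) ^ (N + j))
       = c * q ^ (j choose 2) * w ^ j"
proof -
  define D where "D = q ^ (Suc N choose 2)"
  have "(Suc N choose 2) + ((N + j) choose 2) = N * (N + j) + (j choose 2)"
    using double_choose_two[of N] by (simp add: choose_two_Suc choose_two_add algebra_simps)
  then have E: "D * q ^ ((N + j) choose 2) = q ^ (N * (N + j)) * q ^ (j choose 2)"
    by (simp add: D_def flip: power_add)
  have "(w / q ^ N) ^ (N + j) = w ^ N * w ^ j / q ^ (N * (N + j))"
    by (simp add: power_divide power_add power_mult)
  then have "D / w ^ N * (c * q ^ ((N + j) choose 2) * (w / q ^ N) ^ (N + j))
      = c * (D * q ^ ((N + j) choose 2)) * w ^ j / q ^ (N * (N + j))"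
    using assms(2) by simp
  then show ?thesis
    using assms(1) by (simp add: E flip: D_def)
qed

lemma finite_jacobi_term_lower:
  fixes q w :: "'a::field"
  assumes "q \<noteq> 0" "w \<noteq> 0" "j < N"
  shows "q ^ (Suc N choose 2) / w ^ N * (c * q ^ ((N - Suc j) choose 2) * (w / q ^ N) ^ (N - Suc j))
       = c * q ^ (Suc (Suc j) choose 2) / w ^ Suc j"
proof -
  define D where "D = q ^ (Suc N choose 2)"
  define m where "m = N - Suc j"
  have N: "N = m + Suc j" using assms(3) by (simp add: m_def)
  have "(Suc N choose 2) + (m choose 2) = N * m + (Suc (Suc j) choose 2)"
    using double_choose_two[of m] unfolding N by (simp add: choose_two_Suc choose_two_add algebra_simps)
  then have E: "D * q ^ (m choose 2) = q ^ (N * m) * q ^ (Suc (Suc j) choose 2)"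
    by (simp add: D_def flip: power_add)
  have "(w / q ^ N) ^ m = w ^ m / q ^ (N * m)"
    by (simp add: power_divide power_mult)
  moreover have "w ^ N = w ^ m * w ^ Suc j"
    by (simp add: N power_add)
  ultimately have "D / w ^ N * (c * q ^ (m choose 2) * (w / q ^ N) ^ m)
      = c * (D * q ^ (m choose 2)) * w ^ m / (w ^ m * w ^ Suc j * q ^ (N * m))"
    using assms(2) by (simp add: ac_simps)
  then show ?thesis
    using assms(1,2) by (simp add: E flip: D_def m_def)
qed

lemma finite_jacobi_triple_product:
  fixes q w :: "'a::field"
  assumes "q \<noteq> 0" "w \<noteq> 0"
  shows "(\<Prod>i<N. 1 + w * q ^ i) * (\<Prod>i<N. 1 + q ^ Suc i / w)
       = (\<Sum>j\<le>N. qbinomial q (2 * N) (N + j) * q ^ (j choose 2) * w ^ j)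
         + (\<Sum>j<N. qbinomial q (2 * N) (N - Suc j) * q ^ (Suc (Suc j) choose 2) / w ^ Suc j)"
proof -
  let ?t = "\<lambda>k. qbinomial q (2 * N) k * q ^ (k choose 2) * (w / q ^ N) ^ k"
  let ?c = "q ^ (Suc N choose 2) / w ^ N"
  have "(\<Prod>i<N. 1 + w * q ^ i) * (\<Prod>i<N. 1 + q ^ Suc i / w)
      = ?c * ((\<Sum>j\<le>N. ?t (N + j)) + (\<Sum>j<N. ?t (N - Suc j)))"
    unfolding finite_jacobi_product_rescale[OF assms] qbinomial_theorem[of "w / q ^ N" q "2 * N"]
      sum_atMost_double_split ..
  also have "\<dots> = (\<Sum>j\<le>N. ?c * ?t (N + j)) + (\<Sum>j<N. ?c * ?t (N - Suc j))"
    by (simp only: distrib_left sum_distrib_left)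
  also have "\<dots> = (\<Sum>j\<le>N. qbinomial q (2 * N) (N + j) * q ^ (j choose 2) * w ^ j)
         + (\<Sum>j<N. qbinomial q (2 * N) (N - Suc j) * q ^ (Suc (Suc j) choose 2) / w ^ Suc j)"
    using finite_jacobi_term_upper[OF assms] finite_jacobi_term_lower[OF assms]
    by (intro arg_cong2[where f = "(+)"] sum.cong) (simp_all only: lessThan_iff)
  finally show ?thesis .
qed

lemma power_Suc_neq_one: "norm (q::complex) < 1 \<Longrightarrow> q * q ^ j \<noteq> 1"
proof
  assume "norm q < 1" "q * q ^ j = 1"
  then have "norm q ^ Suc j = 1" by (metis norm_one norm_power power_Suc)
  with \<open>norm q < 1\<close> show False
    by (metis norm_ge_zero power_less_one_iff zero_less_Suc order.irrefl)
qed

lemma convergent_prod_qpoch: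
  fixes a q :: complex
  assumes "norm q < 1"
  shows "convergent_prod (\<lambda>j. 1 - a * q ^ j)"
proof -
  have "summable (\<lambda>j. norm a * norm q ^ j)"
    using assms by (intro summable_mult summable_geometric) auto
  then have "summable (\<lambda>j. norm ((1 - a * q ^ j) - 1))"
    by (simp add: norm_mult norm_power)
  then show ?thesis
    by (intro abs_convergent_prod_imp_convergent_prod summable_imp_abs_convergent_prod)
qed

lemma LIMSEQ_qpoch:
  fixes a q :: complex
  assumes "norm q < 1"
  shows "qpoch a q \<longlonglongrightarrow> qpoch_inf a q"
  unfolding qpoch_def[abs_def] qpoch_inf_def LIMSEQ_lessThan_iff_atMost
  by (rule convergent_prod_LIMSEQ[OF convergent_prod_qpoch[OF assms]])

lemma qpoch_inf_nonzero:
  fixes a q :: complex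
  assumes "norm q < 1" "\<And>j. a * q ^ j \<noteq> 1"
  shows "qpoch_inf a q \<noteq> 0"
  unfolding qpoch_inf_def
  by (rule prodinf_nonzero[OF convergent_prod_qpoch[OF assms(1)]]) (use assms(2) in auto)

lemma qpoch_inf_self_nonzero: "norm (q::complex) < 1 \<Longrightarrow> qpoch_inf q q \<noteq> 0"
  by (rule qpoch_inf_nonzero) (simp_all add: power_Suc_neq_one)

lemma qpoch_self_nonzero: "norm (q::complex) < 1 \<Longrightarrow> qpoch q q n \<noteq> 0"
  by (auto simp: qpoch_def dest: power_Suc_neq_one)

lemma qpoch_inf_even_odd:
  fixes a q :: complex
  assumes "norm q < 1"
  shows "qpoch_inf a q = qpoch_inf a (q ^ 2) * qpoch_inf (a * q) (q ^ 2)"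
proof -
  have q2: "norm (q ^ 2) < 1" using assms by (simp add: norm_power power_less_one_iff)
  have "qpoch a q (2 * n) = qpoch a (q ^ 2) n * qpoch (a * q) (q ^ 2) n" for n
  proof (induction n)
    case (Suc n)
    have "2 * Suc n = Suc (Suc (2 * n))" "(q ^ 2) ^ n = q ^ (2 * n)"
      by (simp_all add: power_mult)
    with Suc show ?case by (simp only: qpoch_Suc) (simp add: ac_simps)
  qed (simp add: qpoch_def)
  moreover have "(\<lambda>n. qpoch a q (2 * n)) \<longlonglongrightarrow> qpoch_inf a q"
    by (rule LIMSEQ_subseq_LIMSEQ[OF LIMSEQ_qpoch[OF assms], unfolded o_def])
       (simp add: strict_mono_def)
  ultimately have "(\<lambda>n. qpoch a (q ^ 2) n * qpoch (a * q) (q ^ 2) n) \<longlonglongrightarrow> qpoch_inf a q"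
    by simp
  moreover have "(\<lambda>n. qpoch a (q ^ 2) n * qpoch (a * q) (q ^ 2) n)
      \<longlonglongrightarrow> qpoch_inf a (q ^ 2) * qpoch_inf (a * q) (q ^ 2)"
    by (intro tendsto_mult LIMSEQ_qpoch q2)
  ultimately show ?thesis
    using LIMSEQ_unique by blast
qed

lemma qpoch_inf_mult_uminus:
  fixes a q :: complex
  assumes "norm q < 1"
  shows "qpoch_inf a q * qpoch_inf (- a) q = qpoch_inf (a ^ 2) (q ^ 2)"
proof -
  have "(1 - a * q ^ j) * (1 - (- a) * q ^ j) = 1 - a ^ 2 * (q ^ 2) ^ j" for j
    by (simp add: power2_eq_square power_mult_distrib algebra_simps flip: power_mult)
  then show ?thesis
    unfolding qpoch_inf_def prodinf_mult[OF convergent_prod_qpoch[OF assms] convergent_prod_qpoch[OF assms]]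
    by simp
qed

lemma qpoch_inf_odd_mult_uminus:
  fixes q :: complex
  assumes "norm q < 1"
  shows "qpoch_inf q (q ^ 2) * qpoch_inf (- q) q = 1"
proof -
  have q2: "norm (q ^ 2) < 1" using assms by (simp add: norm_power power_less_one_iff)
  have "qpoch_inf q (q ^ 2) * qpoch_inf (- q) q * qpoch_inf (q ^ 2) (q ^ 2)
      = qpoch_inf q q * qpoch_inf (- q) q"
    using qpoch_inf_even_odd[OF assms, of q] by (simp add: power2_eq_square ac_simps)
  also have "\<dots> = qpoch_inf (q ^ 2) (q ^ 2)"
    by (rule qpoch_inf_mult_uminus[OF assms])
  finally show ?thesis
    using qpoch_inf_self_nonzero[OF q2] by simp
qed

lemma qbinomial_eq_divide:
  assumes "norm (q::complex) < 1" "k \<le> n"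
  shows "qbinomial q n k = qpoch q q n / (qpoch q q k * qpoch q q (n - k))"
  using qbinomial_mult_qpoch[OF assms(2), of q] qpoch_self_nonzero[OF assms(1)]
  by (simp add: field_simps)

lemma qbinomial_bounded:
  assumes "norm (q::complex) < 1"
  obtains M where "\<And>n k. norm (qbinomial q n k) \<le> M"
proof -
  have "convergent (qpoch q q)"
    using LIMSEQ_qpoch[OF assms] by (auto simp: convergent_def)
  then obtain B where B: "\<And>n. norm (qpoch q q n) \<le> B"
    by (meson BseqE convergent_imp_Bseq)
  have "(\<lambda>n. inverse (qpoch q q n)) \<longlonglongrightarrow> inverse (qpoch_inf q q)"
    by (intro tendsto_inverse LIMSEQ_qpoch qpoch_inf_self_nonzero assms)
  then have "convergent (\<lambda>n. inverse (qpoch q q n))"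
    by (auto simp: convergent_def)
  then obtain C where C: "\<And>n. norm (inverse (qpoch q q n)) \<le> C"
    by (meson BseqE convergent_imp_Bseq)
  have "norm (qbinomial q n k) \<le> B * C * C" for n k
  proof (cases "k \<le> n")
    case True
    then have "norm (qbinomial q n k)
        = norm (qpoch q q n) * norm (inverse (qpoch q q k)) * norm (inverse (qpoch q q (n - k)))"
      by (simp add: qbinomial_eq_divide[OF assms] norm_divide norm_mult norm_inverse divide_inverse)
    also have "\<dots> \<le> B * C * C"
      by (intro mult_mono B C mult_nonneg_nonneg norm_ge_zero order.trans[OF norm_ge_zero B] order.trans[OF norm_ge_zero C])
    finally show ?thesis .
  next
    case False
    then show ?thesis
      using order.trans[OF norm_ge_zero B] order.trans[OF norm_ge_zero C]
      by (simp add: qbinomial_eq_0)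
  qed
  then show ?thesis using that by blast
qed
lemma tendsto_qbinomial:
  assumes q: "norm (q::complex) < 1"
    and k: "filterlim k at_top F" and nk: "filterlim (\<lambda>x. n x - k x) at_top F"
    and le: "eventually (\<lambda>x. k x \<le> n x) F"
  shows "((\<lambda>x. qbinomial q (n x) (k x)) \<longlongrightarrow> 1 / qpoch_inf q q) F"
proof -
  let ?P = "qpoch_inf q q"
  have n: "filterlim n at_top F"
    by (rule filterlim_at_top_mono[OF k le])
  have "((\<lambda>x. qpoch q q (n x) / (qpoch q q (k x) * qpoch q q (n x - k x))) \<longlongrightarrow> ?P / (?P * ?P)) F"
    using qpoch_inf_self_nonzero[OF q]
    by (intro tendsto_divide tendsto_mult filterlim_compose[OF LIMSEQ_qpoch[OF q]] n k nk) auto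
  moreover have "eventually (\<lambda>x. qpoch q q (n x) / (qpoch q q (k x) * qpoch q q (n x - k x))
      = qbinomial q (n x) (k x)) F"
    using le by eventually_elim (simp add: qbinomial_eq_divide[OF q])
  ultimately show ?thesis
    using qpoch_inf_self_nonzero[OF q] by (simp add: Lim_transform_eventually)
qed

lemma tendsto_qbinomial_central:
  assumes "norm (q::complex) < 1"
  shows "(\<lambda>N. qbinomial q (2 * N) (N + j)) \<longlonglongrightarrow> 1 / qpoch_inf q q"
    and "(\<lambda>N. qbinomial q (2 * N) (N - Suc j)) \<longlonglongrightarrow> 1 / qpoch_inf q q"
proof -
  have "(\<lambda>N::nat. 2 * N - (N + j)) = (\<lambda>N. N - j)" by auto
  then show "(\<lambda>N. qbinomial q (2 * N) (N + j)) \<longlonglongrightarrow> 1 / qpoch_inf q q"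
    using eventually_ge_at_top[of j]
    by (intro tendsto_qbinomial[OF assms] filterlim_add_const_nat_at_top)
       (auto simp: filterlim_minus_const_nat_at_top elim: eventually_mono)
  have "filterlim (\<lambda>N::nat. 2 * N - (N - Suc j)) at_top sequentially"
    by (rule filterlim_at_top_mono[OF filterlim_ident]) (intro always_eventually allI, simp)
  then show "(\<lambda>N. qbinomial q (2 * N) (N - Suc j)) \<longlonglongrightarrow> 1 / qpoch_inf q q"
    by (intro tendsto_qbinomial[OF assms] filterlim_minus_const_nat_at_top always_eventually allI) auto
qed

lemma tannery_partial_sums:
  fixes c :: "nat \<Rightarrow> nat \<Rightarrow> 'a::{real_normed_algebra, banach}"
  assumes bound: "\<And>N j. norm (c N j) \<le> M"
    and lim: "\<And>j. (\<lambda>N. c N j) \<longlonglongrightarrow> L"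
    and summable: "summable (\<lambda>j. norm (t j))"
  shows "(\<lambda>N. \<Sum>j<N + d. c N j * t j) \<longlonglongrightarrow> L * suminf t"
proof -
  define a where "a j N = (if j < N + d then c N j * t j else 0)" for j N
  have partial: "(\<Sum>j<N + d. c N j * t j) = (\<Sum>j. a j N)" for N
    by (subst suminf_finite[of "{..<N + d}"]) (auto simp: a_def)
  have "M \<ge> 0" using order.trans[OF norm_ge_zero bound] .
  have "(\<lambda>N. \<Sum>j. a j N) \<longlonglongrightarrow> (\<Sum>j. L * t j)"
  proof (rule tannerys_theorem[where M = "\<lambda>j. M * norm (t j)", THEN conjunct2, THEN conjunct2])
    fix j
    have "(\<lambda>N. c N j * t j) \<longlonglongrightarrow> L * t j" by (intro tendsto_intros lim)
    moreover have "eventually (\<lambda>N. c N j * t j = a j N) sequentially"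
      using eventually_gt_at_top[of j] by eventually_elim (auto simp: a_def)
    ultimately show "(\<lambda>N. a j N) \<longlonglongrightarrow> L * t j" by (rule Lim_transform_eventually)
  next
    show "eventually (\<lambda>(j, N). norm (a j N) \<le> M * norm (t j)) (at_top \<times>\<^sub>F sequentially)"
      using \<open>M \<ge> 0\<close> bound
      by (intro always_eventually) (auto simp: a_def norm_mult intro!: mult_right_mono order.trans[OF norm_mult_ineq])
  qed (use summable in \<open>auto intro: summable_mult\<close>)
  then show ?thesis
    by (simp add: partial suminf_mult summable_norm_cancel[OF summable])
qed

lemma summable_norm_power_choose_two:
  fixes q w :: complex
  assumes "norm q < 1"
  shows "summable (\<lambda>j. norm (q ^ ((j + d) choose 2) * w ^ j))"
proof -
  have "(\<lambda>j. norm q ^ j) \<longlonglongrightarrow> 0"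
    using assms by (intro LIMSEQ_power_zero) simp
  then have "(\<lambda>j. norm q ^ (j + d) * norm w) \<longlonglongrightarrow> 0"
    by (intro tendsto_mult_left_zero LIMSEQ_ignore_initial_segment)
  then have "eventually (\<lambda>j. norm q ^ (j + d) * norm w < 1 / 2) sequentially"
    by (rule order_tendstoD) simp
  then obtain N where N: "\<And>j. j \<ge> N \<Longrightarrow> norm q ^ (j + d) * norm w < 1 / 2"
    unfolding eventually_sequentially by blast
  show ?thesis
  proof (rule summable_ratio_test[of "1 / 2" N])
    fix j assume "j \<ge> N"
    have "norm (q ^ ((Suc j + d) choose 2) * w ^ Suc j)
        = (norm q ^ (j + d) * norm w) * norm (q ^ ((j + d) choose 2) * w ^ j)"
      by (simp add: choose_two_Suc norm_mult norm_power power_add)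
    also have "\<dots> \<le> 1 / 2 * norm (q ^ ((j + d) choose 2) * w ^ j)"
      using N[OF \<open>j \<ge> N\<close>] by (intro mult_right_mono) auto
    finally show "norm (norm (q ^ ((Suc j + d) choose 2) * w ^ Suc j))
        \<le> 1 / 2 * norm (norm (q ^ ((j + d) choose 2) * w ^ j))" by simp
  qed simp
qed

text \<open>The coefficients [2N, N + j]_q of the finite identity tend to 1/(q;q)_\<infinity> as N \<rightarrow> \<infinity>.\<close>
theorem jacobi_triple_product:
  fixes q w :: complex
  assumes q: "q \<noteq> 0" "norm q < 1" and w: "w \<noteq> 0"
  shows "qpoch_inf (- w) q * qpoch_inf (- (q / w)) q * qpoch_inf q q
       = (\<Sum>j. q ^ (j choose 2) * w ^ j) + (\<Sum>j. q ^ (Suc (Suc j) choose 2) / w ^ Suc j)"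
proof -
  let ?P = "qpoch_inf q q"
  define s where "s j = q ^ (j choose 2) * w ^ j" for j
  define t where "t j = q ^ (Suc (Suc j) choose 2) / w ^ Suc j" for j
  have s: "summable (\<lambda>j. norm (s j))"
    using summable_norm_power_choose_two[OF q(2), of 0 w] by (simp add: s_def)
  have norm_t: "norm (t j) = norm (q ^ ((j + 2) choose 2) * (1 / w) ^ j) / norm w" for j
    by (simp add: t_def norm_divide norm_mult norm_power power_one_over numeral_2_eq_2)
  have t: "summable (\<lambda>j. norm (t j))"
    unfolding norm_t by (rule summable_divide[OF summable_norm_power_choose_two[OF q(2)]])
  obtain M where M: "\<And>n k. norm (qbinomial q n k) \<le> M"
    using qbinomial_bounded[OF q(2)] by blast
  have upper: "(\<lambda>N. \<Sum>j<N + 1. qbinomial q (2 * N) (N + j) * s j) \<longlonglongrightarrow> 1 / ?P * suminf s"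
    by (rule tannery_partial_sums[OF M tendsto_qbinomial_central(1)[OF q(2)] s])
  have lower: "(\<lambda>N. \<Sum>j<N + 0. qbinomial q (2 * N) (N - Suc j) * t j) \<longlonglongrightarrow> 1 / ?P * suminf t"
    by (rule tannery_partial_sums[OF M tendsto_qbinomial_central(2)[OF q(2)] t])
  have "(\<Prod>i<N. 1 + w * q ^ i) * (\<Prod>i<N. 1 + q ^ Suc i / w)
      = (\<Sum>j<N + 1. qbinomial q (2 * N) (N + j) * s j)
        + (\<Sum>j<N + 0. qbinomial q (2 * N) (N - Suc j) * t j)" for N
    unfolding finite_jacobi_triple_product[OF q(1) w] s_def t_def
    by (simp add: lessThan_Suc_atMost mult.assoc)
  then have "(\<lambda>N. qpoch (- w) q N * qpoch (- (q / w)) q N) \<longlonglongrightarrow> 1 / ?P * suminf s + 1 / ?P * suminf t"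
    using tendsto_add[OF upper lower] by (simp add: qpoch_def mult.commute)
  moreover have "(\<lambda>N. qpoch (- w) q N * qpoch (- (q / w)) q N)
      \<longlonglongrightarrow> qpoch_inf (- w) q * qpoch_inf (- (q / w)) q"
    by (intro tendsto_mult LIMSEQ_qpoch q(2))
  ultimately have "qpoch_inf (- w) q * qpoch_inf (- (q / w)) q = 1 / ?P * suminf s + 1 / ?P * suminf t"
    using LIMSEQ_unique by blast
  then show ?thesis
    using qpoch_inf_self_nonzero[OF q(2)] unfolding s_def t_def by (simp add: field_simps)
qed

lemma qpoch_inf_shift_uminus_one:
  fixes q :: complex
  assumes "norm q < 1"
  shows "qpoch_inf (- 1) q = 2 * qpoch_inf (- q) q"
proof -
  have "qpoch_inf (- q) q = (\<Prod>n. 1 - (- 1) * q ^ Suc n)"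
    by (simp add: qpoch_inf_def)
  also have "\<dots> = qpoch_inf (- 1) q / 2"
    using prodinf_split_head[OF convergent_prod_qpoch[OF assms, of "- 1"]]
    by (simp add: qpoch_inf_def)
  finally show ?thesis by (simp add: field_simps)
qed

theorem gauss_triangular_series:
  fixes q :: complex
  assumes "norm q < 1"
  shows "(\<Sum>j. q ^ (Suc j choose 2)) = qpoch_inf (q ^ 2) (q ^ 2) / qpoch_inf q (q ^ 2)"
proof (cases "q = 0")
  case True
  have "(\<Sum>j. q ^ (Suc j choose 2)) = (\<Sum>j\<in>{0}. q ^ (Suc j choose 2))"
    by (rule suminf_finite) (auto simp: True choose_two_Suc gr0_conv_Suc)
  then show ?thesis by (simp add: True choose_two qpoch_inf_def)
next
  case False
  let ?g = "\<lambda>j. q ^ (Suc j choose 2)"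
  have "q ^ (j choose 2) * q ^ j = ?g j" "q ^ (Suc (Suc j) choose 2) / q ^ Suc j = ?g j" for j
    using False by (simp_all add: choose_two_Suc power_add)
  then have "qpoch_inf (- q) q * qpoch_inf (- 1) q * qpoch_inf q q = 2 * (\<Sum>j. ?g j)"
    using jacobi_triple_product[OF False assms False] False by simp
  then have "(\<Sum>j. ?g j) = qpoch_inf (- q) q * (qpoch_inf q q * qpoch_inf (- q) q)"
    by (simp add: qpoch_inf_shift_uminus_one[OF assms] ac_simps)
  also have "\<dots> = qpoch_inf (- q) q * qpoch_inf (q ^ 2) (q ^ 2)"
    by (simp add: qpoch_inf_mult_uminus[OF assms])
  also have "\<dots> = qpoch_inf (q ^ 2) (q ^ 2) / qpoch_inf q (q ^ 2)"
    using inverse_unique[OF qpoch_inf_odd_mult_uminus[OF assms]]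
    by (simp add: divide_inverse ac_simps)
  finally show ?thesis .
qed

lemma jacobi_squares_term_pos:
  fixes q :: "'a::comm_ring_1"
  shows "((q ^ 2) ^ 2) ^ (j choose 2) * (- (q ^ 2)) ^ j = (- 1) ^ j * q ^ (2 * j\<^sup>2)"
proof -
  have "4 * (j choose 2) + 2 * j = 2 * j\<^sup>2"
    using double_choose_two[of j] by (simp add: power2_eq_square)
  then have "q ^ (4 * (j choose 2)) * q ^ (2 * j) = q ^ (2 * j\<^sup>2)"
    by (simp flip: power_add)
  moreover have "((q ^ 2) ^ 2) ^ (j choose 2) = q ^ (4 * (j choose 2))"
    unfolding power_mult[symmetric] by simp
  ultimately show ?thesis
    unfolding power_minus[of "q ^ 2"] power_mult[of q 2 j, symmetric] by (simp only: ac_simps)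
qed

lemma jacobi_squares_term_neg:
  fixes q :: "'a::comm_ring_1"
  shows "((q ^ 2) ^ 2) ^ (Suc (Suc j) choose 2)
       = (- 1) ^ Suc j * q ^ (2 * (Suc j)\<^sup>2) * (- (q ^ 2)) ^ Suc j"
proof -
  have "4 * (Suc (Suc j) choose 2) = 2 * (Suc j)\<^sup>2 + 2 * Suc j"
    using double_choose_two[of "Suc j"] by (simp add: choose_two_Suc[of "Suc j"] power2_eq_square)
  moreover have "((q ^ 2) ^ 2) ^ (Suc (Suc j) choose 2) = q ^ (4 * (Suc (Suc j) choose 2))"
    unfolding power_mult[symmetric] by simp
  ultimately have "((q ^ 2) ^ 2) ^ (Suc (Suc j) choose 2) = q ^ (2 * (Suc j)\<^sup>2) * q ^ (2 * Suc j)"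
    by (simp only: power_add)
  also have "\<dots> = ((- 1) ^ Suc j * (- 1) ^ Suc j) * (q ^ (2 * (Suc j)\<^sup>2) * q ^ (2 * Suc j))"
    by (simp flip: power_mult_distrib)
  finally show ?thesis
    unfolding power_minus[of "q ^ 2"] power_mult[of q 2 "Suc j", symmetric] by (simp only: ac_simps)
qed

lemma jacobi_triple_product_squares:
  fixes q :: complex
  assumes "q \<noteq> 0" "norm q < 1"
  shows "qpoch_inf (q ^ 2) ((q ^ 2) ^ 2) * qpoch_inf (q ^ 2) ((q ^ 2) ^ 2) * qpoch_inf ((q ^ 2) ^ 2) ((q ^ 2) ^ 2)
       = 1 - 2 * (\<Sum>j. (- 1) ^ j * q ^ (2 * (Suc j)\<^sup>2))"
proof -
  define Q where "Q = (q ^ 2) ^ 2"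
  define v where "v j = (- 1) ^ j * q ^ (2 * j\<^sup>2)" for j :: nat
  have Q: "Q \<noteq> 0" "norm Q < 1"
    using assms by (simp_all add: Q_def norm_power power_less_one_iff)
  have upper: "Q ^ (j choose 2) * (- (q ^ 2)) ^ j = v j" for j
    unfolding Q_def v_def by (rule jacobi_squares_term_pos)
  have lower: "Q ^ (Suc (Suc j) choose 2) / (- (q ^ 2)) ^ Suc j = v (Suc j)" for j
    using assms(1) unfolding Q_def v_def jacobi_squares_term_neg by simp
  have "summable v"
    using summable_norm_cancel[OF summable_norm_power_choose_two[OF Q(2), of 0 "- (q ^ 2)"]]
    by (simp add: upper)
  have "- (Q / - (q ^ 2)) = q ^ 2" "- (q ^ 2) \<noteq> 0"
    using assms(1) by (simp_all add: Q_def power2_eq_square)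
  then have "qpoch_inf (q ^ 2) Q * qpoch_inf (q ^ 2) Q * qpoch_inf Q Q = (\<Sum>j. v j) + (\<Sum>j. v (Suc j))"
    using jacobi_triple_product[OF Q, of "- (q ^ 2)"] unfolding upper lower minus_minus by simp
  also have "(\<Sum>j. v j) = 1 + (\<Sum>j. v (Suc j))"
    using suminf_split_head[OF \<open>summable v\<close>] by (simp add: v_def[of 0])
  also have "(\<Sum>j. v (Suc j)) = - (\<Sum>j. (- 1) ^ j * q ^ (2 * (Suc j)\<^sup>2))"
  proof -
    have "v (Suc j) = - ((- 1) ^ j * q ^ (2 * (Suc j)\<^sup>2))" for j
      by (simp add: v_def)
    moreover have "summable (\<lambda>j. v (Suc j))"
      using \<open>summable v\<close> by (simp add: summable_Suc_iff)
    ultimately show ?thesis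
      by (simp add: suminf_minus summable_minus_iff)
  qed
  finally show ?thesis
    unfolding Q_def by simp
qed

theorem gauss_square_series:
  fixes q :: complex
  assumes "norm q < 1"
  shows "1 - 2 * (\<Sum>j. (- 1) ^ j * q ^ (2 * (Suc j)\<^sup>2))
       = qpoch_inf (q ^ 2) (q ^ 2) / qpoch_inf (- (q ^ 2)) (q ^ 2)"
proof (cases "q = 0")
  case True
  then show ?thesis by (simp add: power_0_left qpoch_inf_def)
next
  case False
  have q2: "norm (q ^ 2) < 1"
    using assms by (simp add: norm_power power_less_one_iff)
  have "qpoch_inf (q ^ 2) (q ^ 2) = qpoch_inf (q ^ 2) ((q ^ 2) ^ 2) * qpoch_inf ((q ^ 2) ^ 2) ((q ^ 2) ^ 2)"
    using qpoch_inf_even_odd[OF q2, of "q ^ 2"] by (simp only: power2_eq_square[of "q ^ 2"])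
  then have "1 - 2 * (\<Sum>j. (- 1) ^ j * q ^ (2 * (Suc j)\<^sup>2))
      = qpoch_inf (q ^ 2) ((q ^ 2) ^ 2) * qpoch_inf (q ^ 2) (q ^ 2)"
    using jacobi_triple_product_squares[OF False assms] by (simp add: mult.assoc)
  also have "qpoch_inf (q ^ 2) ((q ^ 2) ^ 2) = inverse (qpoch_inf (- (q ^ 2)) (q ^ 2))"
    using inverse_unique[OF qpoch_inf_odd_mult_uminus[OF q2,
          unfolded mult.commute[of "qpoch_inf (q ^ 2) ((q ^ 2) ^ 2)"]]] ..
  finally show ?thesis
    by (simp add: divide_inverse ac_simps)
qed

lemma summable_power_exponent_ge:
  fixes q :: complex and s :: "nat \<Rightarrow> complex"
  assumes "norm q < 1" "\<And>k. k \<le> e k" "\<And>k. norm (s k) \<le> 1"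
  shows "summable (\<lambda>k. s k * q ^ e k)"
proof (rule summable_comparison_test'[OF summable_geometric[of "norm q"]])
  fix k
  have "norm (s k * q ^ e k) \<le> 1 * norm q ^ e k"
    unfolding norm_mult norm_power by (rule mult_right_mono[OF assms(3)]) simp
  also have "\<dots> \<le> norm q ^ k"
    using assms(1,2) by (simp add: power_decreasing)
  finally show "norm (s k * q ^ e k) \<le> norm q ^ k" .
qed (use assms(1) in simp)

lemma suminf_even_odd:
  fixes c :: "nat \<Rightarrow> 'a::real_normed_vector"
  assumes "summable c" "summable (\<lambda>t. c (2 * t))" "summable (\<lambda>t. c (2 * t + 1))"
  shows "suminf c = (\<Sum>t. c (2 * t)) + (\<Sum>t. c (2 * t + 1))"
proof -
  have "(\<lambda>t. sum c {t * 2..<t * 2 + 2}) sums suminf c"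
    using sums_group[OF summable_sums[OF assms(1)], of 2] by simp
  then have "(\<lambda>t. c (2 * t) + c (2 * t + 1)) sums suminf c"
    by (simp add: numeral_2_eq_2 mult.commute)
  moreover have "(\<lambda>t. c (2 * t) + c (2 * t + 1)) sums ((\<Sum>t. c (2 * t)) + (\<Sum>t. c (2 * t + 1)))"
    by (intro sums_add summable_sums assms(2,3))
  ultimately show ?thesis
    using sums_unique2 by blast
qed

lemma sum_alternating_descending_powers:
  fixes q :: "'a::comm_ring_1"
  assumes "M \<le> K"
  shows "(1 + q) * (\<Sum>m\<le>M. (- 1) ^ m * q ^ (K - m)) = q ^ Suc K + (- 1) ^ M * q ^ (K - M)"
  using assms
proof (induction M)
  case (Suc M)
  then have "q ^ (K - M) = q * q ^ (K - Suc M)"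
    by (metis Suc_diff_le diff_Suc_Suc power_Suc)
  with Suc show ?case
    by (simp add: algebra_simps)
qed (simp add: algebra_simps)

lemma sum_alternating_ascending_powers:
  fixes q :: "'a::comm_ring_1"
  shows "(1 + q) * (\<Sum>m=1..L. (- 1) ^ m * q ^ (F + m)) = (- 1) ^ L * q ^ (F + L + 1) - q ^ (F + 1)"
  by (induction L) (simp_all add: algebra_simps)

lemma has_sum_Sigma_geometric_bound:
  fixes F :: "nat \<times> nat \<Rightarrow> 'a::banach" and r :: real
  assumes fin: "\<And>k. finite (B k)"
    and bound: "\<And>k m. m \<in> B k \<Longrightarrow> norm (F (k, m)) \<le> r ^ k * r ^ m"
    and r: "0 \<le> r" "r < 1"
  shows "(F has_sum (\<Sum>k. \<Sum>m\<in>B k. F (k, m))) (Sigma UNIV B)"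
    and "summable (\<lambda>k. \<Sum>m\<in>B k. F (k, m))"
proof -
  have "((\<lambda>m. r ^ k * r ^ m) has_sum (r ^ k * (1 / (1 - r)))) UNIV" for k
    using r by (intro sums_nonneg_imp_has_sum sums_mult geometric_sums) auto
  moreover have "(\<lambda>k. r ^ k * (1 / (1 - r))) summable_on UNIV"
    using r by (intro summable_nonneg_imp_summable_on summable_mult2 summable_geometric) auto
  ultimately have "(\<lambda>(k, m). r ^ k * r ^ m) summable_on UNIV \<times> UNIV"
    using r by (intro summable_on_SigmaI[where g = "\<lambda>k. r ^ k * (1 / (1 - r))"]) auto
  then have "(\<lambda>(k, m). r ^ k * r ^ m) summable_on Sigma UNIV B"
    by (rule summable_on_subset_banach) auto
  then have "(\<lambda>x. norm (F x)) summable_on Sigma UNIV B"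
    by (rule Infinite_Sum.abs_summable_on_comparison_test') (use bound in auto)
  then have "F summable_on Sigma UNIV B"
    by (rule abs_summable_summable)
  then have F: "(F has_sum infsum F (Sigma UNIV B)) (Sigma UNIV B)"
    by simp
  then have "(\<lambda>k. \<Sum>m\<in>B k. F (k, m)) sums infsum F (Sigma UNIV B)"
    by (intro has_sum_imp_sums has_sum_SigmaD[OF F]) (use fin in auto)
  then show "summable (\<lambda>k. \<Sum>m\<in>B k. F (k, m))" "(F has_sum (\<Sum>k. \<Sum>m\<in>B k. F (k, m))) (Sigma UNIV B)"
    using F by (auto simp: sums_iff)
qed

lemma expo_eq: "expo n m = ((n + 2 * m) * (n + 2 * m + 3) - 2 * m) div 2"
proof -
  have "(n + 2 * m) * (n + 2 * m + 3) - 2 * m = n * (n + 3) + (2 * n * m + 2 * m * (m + 1)) * 2"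
    by (simp add: algebra_simps)
  then show ?thesis
    unfolding expo_def by simp
qed

lemma expo_nonneg_quadrant:
  assumes "m \<le> k div 2"
  shows "expo (int k - 2 * int m) (int m) = int (k * (k + 3) div 2 - m)"
proof -
  have "k div 2 \<le> k * (k + 3) div 2"
    by (intro div_le_mono) (simp add: algebra_simps)
  then have "m \<le> k * (k + 3) div 2"
    using assms by simp
  moreover have "expo (int k - 2 * int m) (int m) = int k * (int k + 3) div 2 - int m"
    unfolding expo_eq by (simp add: algebra_simps)
  ultimately show ?thesis
    by (simp add: zdiv_int)
qed

lemma expo_neg_quadrant: "expo (2 * int m - int k - 3) (- int m) = int (k * (k + 3) div 2 + m)"
proof -
  have "expo (2 * int m - int k - 3) (- int m) = (int k * (int k + 3) + int m * 2) div 2"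
    unfolding expo_eq by (simp add: algebra_simps)
  then show ?thesis
    by (simp add: zdiv_int)
qed

lemma norm_alternating_power_le:
  fixes q :: complex
  assumes "norm q < 1" "k + m \<le> e"
  shows "norm ((- 1) ^ j * q ^ e) \<le> norm q ^ k * norm q ^ m"
  using assms by (simp add: norm_mult norm_power power_decreasing flip: power_add)

lemma has_sum_nonneg_quadrant:
  fixes q :: complex
  assumes q: "norm q < 1"
  shows "((\<lambda>(n, m). (- 1) powi m * q powi expo n m) has_sum
            (\<Sum>k. \<Sum>m\<le>k div 2. (- 1) ^ m * q ^ (k * (k + 3) div 2 - m))) {(n, m). 0 \<le> n \<and> 0 \<le> m}"
    and "summable (\<lambda>k. \<Sum>m\<le>k div 2. (- 1) ^ m * q ^ (k * (k + 3) div 2 - m))"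
proof -
  define F where "F = (\<lambda>(k, m). (- 1) ^ m * q ^ (k * (k + 3) div 2 - m))"
  have bound: "norm (F (k, m)) \<le> norm q ^ k * norm q ^ m" if "m \<in> {..k div 2}" for k m
  proof -
    have "4 * k div 2 \<le> k * (k + 3) div 2"
      by (intro div_le_mono) (cases k, auto)
    then show ?thesis
      using that unfolding F_def prod.case by (intro norm_alternating_power_le q) auto
  qed
  note sums = has_sum_Sigma_geometric_bound[of "\<lambda>k. {..k div 2}" F, OF _ bound _ q, simplified]
  show "summable (\<lambda>k. \<Sum>m\<le>k div 2. (- 1) ^ m * q ^ (k * (k + 3) div 2 - m))"
    using sums(2) by (simp add: F_def)
  have "((\<lambda>(n, m). (- 1) powi m * q powi expo n m) has_sum s) {(n, m). 0 \<le> n \<and> 0 \<le> m}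
      \<longleftrightarrow> (F has_sum s) (Sigma UNIV (\<lambda>k. {..k div 2}))" for s
  proof (rule has_sum_reindex_bij_witness[where i = "\<lambda>(k, m). (int k - 2 * int m, int m)"
        and j = "\<lambda>(n, m). (nat (n + 2 * m), nat m)"])
    fix x :: "int \<times> int" assume "x \<in> {(n, m). 0 \<le> n \<and> 0 \<le> m}"
    then obtain n m where x: "x = (n, m)" "0 \<le> n" "0 \<le> m" by auto
    then have "expo n m = int (nat (n + 2 * m) * (nat (n + 2 * m) + 3) div 2 - nat m)"
      using expo_nonneg_quadrant[of "nat m" "nat (n + 2 * m)"] by simp
    then show "F (case x of (n, m) \<Rightarrow> (nat (n + 2 * m), nat m)) = (case x of (n, m) \<Rightarrow> (- 1) powi m * q powi expo n m)"
      using x by (simp add: F_def flip: power_int_of_nat[of _ "nat m"])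
  qed auto
  then show "((\<lambda>(n, m). (- 1) powi m * q powi expo n m) has_sum
      (\<Sum>k. \<Sum>m\<le>k div 2. (- 1) ^ m * q ^ (k * (k + 3) div 2 - m))) {(n, m). 0 \<le> n \<and> 0 \<le> m}"
    using sums(1) by (simp add: F_def)
qed

lemma has_sum_neg_quadrant:
  fixes q :: complex
  assumes q: "norm q < 1"
  shows "((\<lambda>(n, m). (- 1) powi m * q powi expo n m) has_sum
            (\<Sum>k. \<Sum>m=1..(k + 2) div 2. (- 1) ^ m * q ^ (k * (k + 3) div 2 + m))) {(n, m). n < 0 \<and> m < 0}"
    and "summable (\<lambda>k. \<Sum>m=1..(k + 2) div 2. (- 1) ^ m * q ^ (k * (k + 3) div 2 + m))"
proof -
  define F where "F = (\<lambda>(k, m). (- 1) ^ m * q ^ (k * (k + 3) div 2 + m))"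
  have bound: "norm (F (k, m)) \<le> norm q ^ k * norm q ^ m" if "m \<in> {1..(k + 2) div 2}" for k m
  proof -
    have "2 * k div 2 \<le> k * (k + 3) div 2"
      by (intro div_le_mono) auto
    then show ?thesis
      unfolding F_def prod.case by (intro norm_alternating_power_le q) auto
  qed
  note sums = has_sum_Sigma_geometric_bound[of "\<lambda>k. {1..(k + 2) div 2}" F, OF _ bound _ q, simplified]
  show "summable (\<lambda>k. \<Sum>m=1..(k + 2) div 2. (- 1) ^ m * q ^ (k * (k + 3) div 2 + m))"
    using sums(2) by (simp add: F_def)
  have "((\<lambda>(n, m). (- 1) powi m * q powi expo n m) has_sum s) {(n, m). n < 0 \<and> m < 0}
      \<longleftrightarrow> (F has_sum s) (Sigma UNIV (\<lambda>k. {1..(k + 2) div 2}))" for s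
  proof (rule has_sum_reindex_bij_witness[where i = "\<lambda>(k, m). (2 * int m - int k - 3, - int m)"
        and j = "\<lambda>(n, m). (nat (- (n + 2 * m)) - 3, nat (- m))"])
    fix x :: "int \<times> int" assume "x \<in> {(n, m). n < 0 \<and> m < 0}"
    then obtain n m where x: "x = (n, m)" "n < 0" "m < 0" by auto
    then have "expo n m = int ((nat (- (n + 2 * m)) - 3) * (nat (- (n + 2 * m)) - 3 + 3) div 2 + nat (- m))"
      using expo_neg_quadrant[of "nat (- m)" "nat (- (n + 2 * m)) - 3"] by simp
    then have "q powi expo n m = q ^ ((nat (- (n + 2 * m)) - 3) * (nat (- (n + 2 * m)) - 3 + 3) div 2 + nat (- m))"
      by (simp only: power_int_of_nat)
    moreover have "(- 1 :: complex) powi m = (- 1) ^ nat (- m)"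
      using x by (cases "even m") (simp_all add: power_int_def)
    ultimately show "F (case x of (n, m) \<Rightarrow> (nat (- (n + 2 * m)) - 3, nat (- m)))
        = (case x of (n, m) \<Rightarrow> (- 1) powi m * q powi expo n m)"
      using x by (simp only: F_def prod.case)
  qed auto
  then show "((\<lambda>(n, m). (- 1) powi m * q powi expo n m) has_sum
      (\<Sum>k. \<Sum>m=1..(k + 2) div 2. (- 1) ^ m * q ^ (k * (k + 3) div 2 + m))) {(n, m). n < 0 \<and> m < 0}"
    using sums(1) by (simp add: F_def)
qed

lemma choose_two_Suc_Suc_eq: "Suc (Suc k) choose 2 = Suc (k * (k + 3) div 2)"
proof -
  have "Suc (Suc k) * Suc k = k * (k + 3) + 2"
    by (simp add: algebra_simps)
  then show ?thesis
    by (simp add: choose_two)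
qed

lemma even_mult_add_three_div_two: "2 * t * (2 * t + 3) div 2 = 2 * t\<^sup>2 + 3 * (t::nat)"
proof -
  have "2 * t * (2 * t + 3) = 2 * (2 * t\<^sup>2 + 3 * t)"
    by (simp add: algebra_simps power2_eq_square)
  then show ?thesis by simp
qed

lemma odd_mult_add_three_div_two: "(2 * t + 1) * (2 * t + 1 + 3) div 2 = 2 * t\<^sup>2 + 5 * t + (2::nat)"
proof -
  have "(2 * t + 1) * (2 * t + 1 + 3) = 2 * (2 * t\<^sup>2 + 5 * t + 2)"
    by (simp add: algebra_simps power2_eq_square)
  then show ?thesis by simp
qed

lemma summable_gauss_series:
  fixes q :: complex
  assumes "norm q < 1"
  shows "summable (\<lambda>j. q ^ (Suc j choose 2))"
    and "summable (\<lambda>t. (- 1) ^ t * q ^ (2 * t\<^sup>2 + 2 * t))"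
    and "summable (\<lambda>t. (- 1) ^ t * q ^ (2 * (Suc t)\<^sup>2))"
  using summable_power_exponent_ge[OF assms, of "\<lambda>j. Suc j choose 2" "\<lambda>_. 1"]
    summable_power_exponent_ge[OF assms, of "\<lambda>t. 2 * t\<^sup>2 + 2 * t" "\<lambda>t. (- 1) ^ t"]
    summable_power_exponent_ge[OF assms, of "\<lambda>t. 2 * (Suc t)\<^sup>2" "\<lambda>t. (- 1) ^ t"]
  by (simp_all add: choose_two_Suc norm_power power2_eq_square)

lemma suminf_triangular_tail:
  fixes q :: complex
  assumes "norm q < 1"
  shows "summable (\<lambda>k. q ^ (Suc (Suc k) choose 2))"
    and "(\<Sum>k. q ^ (Suc (Suc k) choose 2)) = (\<Sum>j. q ^ (Suc j choose 2)) - 1"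
  using summable_gauss_series(1)[OF assms] suminf_split_head[OF summable_gauss_series(1)[OF assms]]
    summable_Suc_iff[where f = "\<lambda>j. q ^ (Suc j choose 2)"]
  by (simp_all add: binomial_eq_0)

lemma nonneg_quadrant_sum:
  fixes q :: complex
  assumes q: "norm q < 1"
  shows "(1 + q) * (\<Sum>\<^sub>\<infinity>(n, m)\<in>{(n::int, m::int). 0 \<le> n \<and> 0 \<le> m}. (- 1) powi m * q powi expo n m)
       = (\<Sum>j. q ^ (Suc j choose 2)) - 1
         + (\<Sum>t. (- 1) ^ t * q ^ (2 * t\<^sup>2 + 2 * t)) + (\<Sum>t. (- 1) ^ t * q ^ (2 * (Suc t)\<^sup>2))"
proof -
  define b where "b k = (\<Sum>m\<le>k div 2. (- 1) ^ m * q ^ (k * (k + 3) div 2 - m))" for k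
  define c where "c k = (- 1) ^ (k div 2) * q ^ (k * (k + 3) div 2 - k div 2)" for k
  let ?g = "\<lambda>k. q ^ (Suc (Suc k) choose 2)"
  note S = has_sum_nonneg_quadrant[OF q, folded b_def]
  note G = summable_gauss_series[OF q]
  note g = suminf_triangular_tail[OF q]
  have telescope: "(1 + q) * b k = ?g k + c k" for k
  proof -
    have "k div 2 \<le> k * (k + 3) div 2"
      by (intro div_le_mono) (simp add: algebra_simps)
    then show ?thesis
      unfolding b_def c_def choose_two_Suc_Suc_eq by (simp add: sum_alternating_descending_powers)
  qed
  have "c = (\<lambda>k. (1 + q) * b k - ?g k)"
    by (simp add: telescope fun_eq_iff)
  then have "summable c"
    using S(2) g(1) by (simp add: summable_diff summable_mult)
  moreover have "c (2 * t) = (- 1) ^ t * q ^ (2 * t\<^sup>2 + 2 * t)" "c (2 * t + 1) = (- 1) ^ t * q ^ (2 * (Suc t)\<^sup>2)" for t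
    by (simp_all add: c_def even_mult_add_three_div_two odd_mult_add_three_div_two power2_eq_square algebra_simps)
  ultimately have "suminf c = (\<Sum>t. (- 1) ^ t * q ^ (2 * t\<^sup>2 + 2 * t)) + (\<Sum>t. (- 1) ^ t * q ^ (2 * (Suc t)\<^sup>2))"
    using suminf_even_odd[of c] G(2,3) by simp
  moreover have "(1 + q) * suminf b = (\<Sum>k. ?g k) + suminf c"
    using S(2) g(1) \<open>summable c\<close> by (simp add: telescope suminf_add flip: suminf_mult)
  ultimately show ?thesis
    using infsumI[OF S(1)] g(2) by simp
qed

lemma neg_quadrant_sum:
  fixes q :: complex
  assumes q: "norm q < 1"
  shows "(1 + q) * (\<Sum>\<^sub>\<infinity>(n, m)\<in>{(n::int, m::int). n < 0 \<and> m < 0}. (- 1) powi m * q powi expo n m)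
       = (\<Sum>t. (- 1) ^ t * q ^ (2 * t\<^sup>2 + 2 * t)) - (\<Sum>t. (- 1) ^ t * q ^ (2 * (Suc t)\<^sup>2))
         - (\<Sum>j. q ^ (Suc j choose 2))"
proof -
  define b where "b k = (\<Sum>m=1..(k + 2) div 2. (- 1) ^ m * q ^ (k * (k + 3) div 2 + m))" for k
  define d where "d k = (- 1) ^ ((k + 2) div 2) * q ^ (k * (k + 3) div 2 + (k + 2) div 2 + 1)" for k
  let ?g = "\<lambda>k. q ^ (Suc (Suc k) choose 2)"
  let ?a = "\<lambda>t. (- 1) ^ t * q ^ (2 * t\<^sup>2 + 2 * t)"
  note S = has_sum_neg_quadrant[OF q, folded b_def]
  note G = summable_gauss_series[OF q]
  note g = suminf_triangular_tail[OF q]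
  have a: "summable (\<lambda>t. ?a (Suc t))" "(\<Sum>t. ?a (Suc t)) = (\<Sum>t. ?a t) - 1"
    using G(2) suminf_split_head[OF G(2)] summable_Suc_iff[where f = ?a] by simp_all
  have telescope: "(1 + q) * b k = d k - ?g k" for k
    unfolding b_def d_def choose_two_Suc_Suc_eq unfolding Suc_eq_plus1 by (rule sum_alternating_ascending_powers)
  have "d = (\<lambda>k. (1 + q) * b k + ?g k)"
    by (simp add: telescope fun_eq_iff)
  then have "summable d"
    using S(2) g(1) by (simp add: summable_add summable_mult)
  moreover have "d (2 * t) = - ((- 1) ^ t * q ^ (2 * (Suc t)\<^sup>2))" "d (2 * t + 1) = ?a (Suc t)" for t
    by (simp_all add: d_def even_mult_add_three_div_two odd_mult_add_three_div_two power2_eq_square algebra_simps)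
  ultimately have "suminf d = - (\<Sum>t. (- 1) ^ t * q ^ (2 * (Suc t)\<^sup>2)) + (\<Sum>t. ?a (Suc t))"
    using suminf_even_odd[of d] G(3) a(1) by (simp add: suminf_minus summable_minus_iff)
  moreover have "(1 + q) * suminf b = suminf d - (\<Sum>k. ?g k)"
    using S(2) g(1) \<open>summable d\<close> by (simp add: telescope suminf_diff flip: suminf_mult)
  ultimately show ?thesis
    using infsumI[OF S(1)] g(2) a(2) by simp
qed

theorem mainTheorem6:
  fixes q :: complex
  assumes "norm q < 1"
  shows "(\<Sum>\<^sub>\<infinity>(n, m)\<in>{(n::int, m::int). 0 \<le> n \<and> 0 \<le> m}. (-1) powi m * q powi expo n m)
       - (\<Sum>\<^sub>\<infinity>(n, m)\<in>{(n::int, m::int). n < 0 \<and> m < 0}. (-1) powi m * q powi expo n m)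
       = 2 * qpoch_inf (q^2) (q^2) / ((1 + q) * qpoch_inf q (q^2))
         - qpoch_inf (q^2) (q^2) / ((1 + q) * qpoch_inf (- (q^2)) (q^2))"
proof -
  let ?S = "(\<Sum>\<^sub>\<infinity>(n, m)\<in>{(n::int, m::int). 0 \<le> n \<and> 0 \<le> m}. (-1) powi m * q powi expo n m)
       - (\<Sum>\<^sub>\<infinity>(n, m)\<in>{(n::int, m::int). n < 0 \<and> m < 0}. (-1) powi m * q powi expo n m)"
  have "1 + q \<noteq> 0"
    using assms by (auto simp: add_eq_0_iff)
  have "(1 + q) * ?S = 2 * (\<Sum>j. q ^ (Suc j choose 2)) - (1 - 2 * (\<Sum>t. (- 1) ^ t * q ^ (2 * (Suc t)\<^sup>2)))"
    using nonneg_quadrant_sum[OF assms] neg_quadrant_sum[OF assms] by (simp add: algebra_simps)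
  also have "\<dots> = 2 * qpoch_inf (q ^ 2) (q ^ 2) / qpoch_inf q (q ^ 2)
      - qpoch_inf (q ^ 2) (q ^ 2) / qpoch_inf (- (q ^ 2)) (q ^ 2)"
    by (simp add: gauss_triangular_series[OF assms] gauss_square_series[OF assms])
  finally have "?S = (2 * qpoch_inf (q ^ 2) (q ^ 2) / qpoch_inf q (q ^ 2)
      - qpoch_inf (q ^ 2) (q ^ 2) / qpoch_inf (- (q ^ 2)) (q ^ 2)) / (1 + q)"
    unfolding nonzero_eq_divide_eq[OF \<open>1 + q \<noteq> 0\<close>] by (simp only: mult.commute)
  then show ?thesis
    by (simp only: diff_divide_distrib divide_divide_eq_left')
qed

end
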